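(* Let $(t_j^i)_{0\le j\le i}$ be real numbers and let $h_{j,k}^i$ ($0\le k\le i$, $0\le j\le i-k$) be defined by $h_{j,0}^i=t_j^i$ and $h_{j,k}^i=h_{j,k-1}^{i-1}+h_{j,k-1}^{i}+h_{j+1,k-1}^{i}$ for $k\ge 1$. If $t_j^i=t_{i-j}^i$ for all $0\le j\le i$, then $h_{j,k}^i=h_{i-(j+k),k}^i$ for all $0\leq k \leq i$, $0\leq j \leq i-k$. *)

theory Defs
  imports Complex_Main
begin

text \<open>The triangular array t is given as a function t i j (meaningful for j \<le> i).
  hh t i j k is h^i_{j,k}; the recursion only refers to indices within the
  range 0 \<le> k \<le> i, 0 \<le> j \<le> i - k when started inside that range.\<close>

primrec hh :: "(nat \<Rightarrow> nat \<Rightarrow> real) \<Rightarrow> nat \<Rightarrow> nat \<Rightarrow> nat \<Rightarrow> real" where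
  "hh t i j 0 = t i j"
| "hh t i j (Suc k) = hh t (i - 1) j k + hh t i j k + hh t i (Suc j) k"

end

(* The reflection j |-> i - (j + k) maps the admissible range of h^i_{.,k}
   onto itself; on the three terms of the recursion for h^i_{j,k+1} it fixes the first one
   (row i - 1, where i - 1 - (j + k) is the reflection of j) and swaps the other two. *)

theory Submission
  imports Defs
begin

lemma hh_reflect:
  fixes t :: "nat \<Rightarrow> nat \<Rightarrow> real"
  assumes sym: "\<And>i j. j \<le> i \<Longrightarrow> t i j = t i (i - j)"
    and "k \<le> i" and "j \<le> i - k"
  shows "hh t i j k = hh t i (i - (j + k)) k"
  using assms(2,3)
proof (induction k arbitrary: i j)
  case 0
  then show ?case using sym[of j i] by simp
next
  case (Suc k)
  define j' where "j' = i - (j + Suc k)"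
  have first: "hh t (i - 1) j k = hh t (i - 1) j' k"
    using Suc.IH[of "i - 1" j] Suc.prems by (simp add: j'_def)
  have middle: "hh t i j k = hh t i (Suc j') k"
    using Suc.IH[of i j] Suc.prems by (simp add: j'_def Suc_diff_Suc)
  have last: "hh t i (Suc j) k = hh t i j' k"
    using Suc.IH[of i "Suc j"] Suc.prems by (simp add: j'_def)
  have "hh t i j (Suc k) = hh t (i - 1) j' k + hh t i j' k + hh t i (Suc j') k"
    using first middle last by simp
  then show ?case by (simp add: j'_def)
qed

theorem theorem5:
  fixes t :: "nat \<Rightarrow> nat \<Rightarrow> real"
  assumes sym: "\<And>i j. j \<le> i \<Longrightarrow> t i j = t i (i - j)"
  shows "\<forall>i k j. k \<le> i \<longrightarrow> j \<le> i - k \<longrightarrow> hh t i j k = hh t i (i - (j + k)) k"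
  using hh_reflect[where t = t, OF sym] by blast

end
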